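(* Let $a>0$, $b\in\mathbb{R}$, $C>0$ with $b=2a'C^2$ (where $a'\in\mathbb{R}$), and $\omega=a^2/4$. Let $\alpha=a+b/2$, $\beta=b/2$, let $k_\pm(\lambda)=\sqrt{-\omega\mp i\lambda}$ be the branches analytic on $\mathbb{C}\setminus\mathcal{C}_\pm$ with $\operatorname{Im}k_\pm(\lambda)>0$ there, where $\mathcal{C}_+=[i\omega,i\infty)$, $\mathcal{C}_-=(-i\infty,-i\omega]$, and let $$ D(\lambda)=\alpha^2+2i\alpha(k_++k_-)-4k_+k_--\beta^2,\qquad \lambda\in\mathbb{C}\setminus(\mathcal{C}_+\cup\mathcal{C}_-). $$ If $a'=a/C^2$ then $\lambda=0$ is a zero of $D$ of multiplicity $4$; otherwise $\lambda=0$ is a zero of $D$ of multiplicity $2$.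
   Context: $D(\lambda)$ is the determinant whose zeros give the poles of the resolvent of the linearization $\mathbf C$ at the solitary wave $Ce^{-\sqrt\omega|x|}$, with $a=a(C^2)$, $a'=a'(C^2)$. *)

theory Defs
  imports "HOL-Complex_Analysis.Complex_Analysis"
begin

text \<open>Branches k_plus, k_minus of sqrt(-omega -/+ i lambda) with positive imaginary part
  off the cuts [i omega, i inf) resp. (-i inf, -i omega]: k = i * csqrt(omega +/- i lambda),
  csqrt being the principal square root (Re >= 0, cut on the negative reals).\<close>

definition k_plus :: "real \<Rightarrow> complex \<Rightarrow> complex" where
  "k_plus \<omega> z = \<i> * csqrt (complex_of_real \<omega> + \<i> * z)"

definition k_minus :: "real \<Rightarrow> complex \<Rightarrow> complex" where
  "k_minus \<omega> z = \<i> * csqrt (complex_of_real \<omega> - \<i> * z)"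

definition Dfun :: "real \<Rightarrow> real \<Rightarrow> real \<Rightarrow> complex \<Rightarrow> complex" where
  "Dfun \<omega> \<alpha> \<beta> z =
     (complex_of_real \<alpha>)\<^sup>2 + 2 * \<i> * complex_of_real \<alpha> * (k_plus \<omega> z + k_minus \<omega> z)
     - 4 * k_plus \<omega> z * k_minus \<omega> z - (complex_of_real \<beta>)\<^sup>2"

definition zero_of_multiplicity :: "(complex \<Rightarrow> complex) \<Rightarrow> complex \<Rightarrow> nat \<Rightarrow> bool" where
  "zero_of_multiplicity f z n \<longleftrightarrow> f z = 0 \<and> isolated_zero f z \<and> zorder f z = int n"

end

theory Submission
  imports Defs
begin

(* Write k_plus = i s1 and k_minus = i s2 with s1, s2 = csqrt (omega +- i z), so that
   D = alpha^2 - 2 alpha u + 4 p - beta^2 for u = s1 + s2 and p = s1 s2. Since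
   u^2 = 2 omega + 2 p and (alpha - beta)^2 = a^2 = 4 omega, D factors as
   2 (u - a) (u - beta). From p^2 = omega^2 + z^2 one gets
   (u - a) (u + a) (p + omega) = 2 z^2, and both u + a and p + omega stay away from 0
   (Re s1, Re s2 >= 0), so u - a has a zero of exact order 2 at z = 0. The factor
   u - beta is nonzero at 0 unless beta = a, in which case it coincides with u - a and
   the order doubles; beta = a is exactly a' = a / C^2. *)

definition csqrt_sum :: "real \<Rightarrow> complex \<Rightarrow> complex" where
  "csqrt_sum \<omega> z = csqrt (of_real \<omega> + \<i> * z) + csqrt (of_real \<omega> - \<i> * z)"

definition csqrt_prod :: "real \<Rightarrow> complex \<Rightarrow> complex" where
  "csqrt_prod \<omega> z = csqrt (of_real \<omega> + \<i> * z) * csqrt (of_real \<omega> - \<i> * z)"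

lemma zero_of_multiplicity_factor:
  fixes f g :: "complex \<Rightarrow> complex"
  assumes "open S" "z\<^sub>0 \<in> S" "g holomorphic_on S" "g z\<^sub>0 \<noteq> 0" "n > 0"
    and f_eq: "\<And>z. z \<in> S \<Longrightarrow> f z = g z * (z - z\<^sub>0) ^ n"
  shows "zero_of_multiplicity f z\<^sub>0 n"
proof -
  have "isCont g z\<^sub>0"
    using assms(1-3) holomorphic_on_imp_continuous_on continuous_on_eq_continuous_at by blast
  have f_ev: "eventually (\<lambda>z. f z = g z * (z - z\<^sub>0) ^ n) (at z\<^sub>0)"
    using assms(1,2) f_eq eventually_at_topological by blast
  have "((\<lambda>z. g z * (z - z\<^sub>0) ^ n) \<longlongrightarrow> g z\<^sub>0 * (z\<^sub>0 - z\<^sub>0) ^ n) (at z\<^sub>0)"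
    using \<open>isCont g z\<^sub>0\<close> by (intro tendsto_intros) (simp add: isCont_def)
  then have "f \<midarrow>z\<^sub>0\<rightarrow> 0"
    using \<open>n > 0\<close> by (simp add: tendsto_cong[OF f_ev] zero_power)
  moreover have "eventually (\<lambda>z. f z \<noteq> 0) (at z\<^sub>0)"
  proof -
    have "eventually (\<lambda>z. g z \<noteq> 0) (at z\<^sub>0)"
      using \<open>isCont g z\<^sub>0\<close> \<open>g z\<^sub>0 \<noteq> 0\<close> isCont_def tendsto_imp_eventually_ne by blast
    moreover have "eventually (\<lambda>z. z \<noteq> z\<^sub>0) (at z\<^sub>0)"
      by (simp add: eventually_neq_at_within)
    ultimately show ?thesis
      using f_ev by eventually_elim simp
  qed
  moreover have "zorder f z\<^sub>0 = int n"
    using assms(1-4) by (rule zorder_eqI) (simp add: f_eq power_int_of_nat)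
  ultimately show ?thesis
    using f_eq[OF assms(2)] \<open>n > 0\<close> by (simp add: zero_of_multiplicity_def isolated_zero_def)
qed

lemma csqrt_sum_sq: "(csqrt_sum \<omega> z)\<^sup>2 = 2 * of_real \<omega> + 2 * csqrt_prod \<omega> z"
  by (simp add: csqrt_sum_def csqrt_prod_def power2_sum)

lemma csqrt_prod_sq: "(csqrt_prod \<omega> z)\<^sup>2 = (of_real \<omega>)\<^sup>2 + z\<^sup>2"
proof -
  have "(csqrt_prod \<omega> z)\<^sup>2 = (of_real \<omega> + \<i> * z) * (of_real \<omega> - \<i> * z)"
    by (simp add: csqrt_prod_def power_mult_distrib)
  also have "\<dots> = (of_real \<omega>)\<^sup>2 + z\<^sup>2"
    by (simp add: power2_eq_square algebra_simps)
  finally show ?thesis .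
qed

lemma csqrt_sum_0: "\<omega> \<ge> 0 \<Longrightarrow> csqrt_sum \<omega> 0 = of_real (2 * sqrt \<omega>)"
  by (simp add: csqrt_sum_def)

lemma csqrt_sum_add_nonzero:
  assumes "a > 0"
  shows "csqrt_sum \<omega> z + of_real a \<noteq> 0"
proof
  assume "csqrt_sum \<omega> z + of_real a = 0"
  then have "Re (csqrt (of_real \<omega> + \<i> * z)) + Re (csqrt (of_real \<omega> - \<i> * z)) + a = 0"
    unfolding csqrt_sum_def by (metis plus_complex.sel(1) Re_complex_of_real zero_complex.sel(1))
  with assms Re_csqrt[of "of_real \<omega> + \<i> * z"] Re_csqrt[of "of_real \<omega> - \<i> * z"] show False
    by linarith
qed

lemma csqrt_prod_add_nonzero:
  assumes "\<omega> > 0"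
  shows "csqrt_prod \<omega> z + of_real \<omega> \<noteq> 0"
proof
  assume sum0: "csqrt_prod \<omega> z + of_real \<omega> = 0"
  then have "z = 0"
    using csqrt_prod_sq[of \<omega> z] by (simp add: eq_neg_iff_add_eq_0[symmetric])
  then have "csqrt_prod \<omega> z = of_real \<omega>"
    using assms by (simp add: csqrt_prod_def flip: of_real_mult)
  with sum0 assms show False
    by simp
qed

lemma of_real_pm_i_mult_notin_nonpos_Reals:
  assumes "cmod z < \<omega>"
  shows "of_real \<omega> + \<i> * z \<notin> \<real>\<^sub>\<le>\<^sub>0" "of_real \<omega> - \<i> * z \<notin> \<real>\<^sub>\<le>\<^sub>0"
  using assms abs_Im_le_cmod[of z] by (auto simp: complex_nonpos_Reals_iff)

lemma csqrt_sum_holomorphic: "csqrt_sum \<omega> holomorphic_on ball 0 \<omega>"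
  unfolding csqrt_sum_def[abs_def]
  by (intro holomorphic_intros) (simp_all add: of_real_pm_i_mult_notin_nonpos_Reals)

lemma csqrt_prod_holomorphic: "csqrt_prod \<omega> holomorphic_on ball 0 \<omega>"
  unfolding csqrt_prod_def[abs_def]
  by (intro holomorphic_intros) (simp_all add: of_real_pm_i_mult_notin_nonpos_Reals)

lemma csqrt_sum_sub_factor:
  assumes "\<omega> > 0"
  obtains h where "h holomorphic_on ball 0 \<omega>" "\<And>z. h z \<noteq> 0"
    "\<And>z. csqrt_sum \<omega> z - of_real (2 * sqrt \<omega>) = z\<^sup>2 * h z"
proof
  let ?A = "of_real (2 * sqrt \<omega>) :: complex"
  let ?h = "\<lambda>z. 2 / ((csqrt_sum \<omega> z + ?A) * (csqrt_prod \<omega> z + of_real \<omega>))"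
  have A_sq: "?A\<^sup>2 = 4 * of_real \<omega>"
    using assms by (simp add: power_mult_distrib flip: of_real_power)
  have nonzero: "csqrt_sum \<omega> z + ?A \<noteq> 0" "csqrt_prod \<omega> z + of_real \<omega> \<noteq> 0" for z
    using csqrt_sum_add_nonzero[of "2 * sqrt \<omega>" \<omega> z] csqrt_prod_add_nonzero[of \<omega> z] assms
    by simp_all
  show "?h holomorphic_on ball 0 \<omega>"
    using nonzero by (intro holomorphic_intros csqrt_sum_holomorphic csqrt_prod_holomorphic) auto
  show "?h z \<noteq> 0" for z
    using nonzero by simp
  show "csqrt_sum \<omega> z - ?A = z\<^sup>2 * ?h z" for z
  proof -
    have "(csqrt_sum \<omega> z - ?A) * ((csqrt_sum \<omega> z + ?A) * (csqrt_prod \<omega> z + of_real \<omega>)) = 2 * z\<^sup>2"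
      using csqrt_sum_sq[of \<omega> z] csqrt_prod_sq[of \<omega> z] A_sq by algebra
    then show ?thesis
      using nonzero[of z] by (simp add: eq_divide_eq)
  qed
qed

lemma Dfun_eq_csqrt_sum:
  assumes "(\<alpha> - \<beta>)\<^sup>2 = 4 * \<omega>"
  shows "Dfun \<omega> \<alpha> \<beta> z = 2 * (csqrt_sum \<omega> z - of_real (\<alpha> - \<beta>)) * (csqrt_sum \<omega> z - of_real \<beta>)"
proof -
  have "Dfun \<omega> \<alpha> \<beta> z
      = (of_real \<alpha>)\<^sup>2 - 2 * of_real \<alpha> * csqrt_sum \<omega> z + 4 * csqrt_prod \<omega> z - (of_real \<beta>)\<^sup>2"
    by (simp add: Dfun_def k_plus_def k_minus_def csqrt_sum_def csqrt_prod_def algebra_simps)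
  moreover have "(of_real \<alpha> - of_real \<beta>)\<^sup>2 = (4 * of_real \<omega> :: complex)"
    using arg_cong[OF assms, of complex_of_real] by simp
  ultimately show ?thesis
    using csqrt_sum_sq[of \<omega> z] by simp algebra
qed

lemma Dfun_zero_multiplicity_4:
  assumes "\<omega> > 0" "\<alpha> - \<beta> = 2 * sqrt \<omega>" "\<beta> = 2 * sqrt \<omega>"
  shows "zero_of_multiplicity (Dfun \<omega> \<alpha> \<beta>) 0 4"
proof -
  obtain h where h: "h holomorphic_on ball 0 \<omega>" "\<And>z. h z \<noteq> 0"
    "\<And>z. csqrt_sum \<omega> z - of_real (2 * sqrt \<omega>) = z\<^sup>2 * h z"
    using csqrt_sum_sub_factor[OF assms(1)] by blast
  have "(\<alpha> - \<beta>)\<^sup>2 = 4 * \<omega>"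
    using assms(1,2) by (simp add: power_mult_distrib)
  have "Dfun \<omega> \<alpha> \<beta> z = 2 * (h z)\<^sup>2 * (z - 0) ^ 4" for z
  proof -
    have "csqrt_sum \<omega> z - of_real \<beta> = z\<^sup>2 * h z"
      using h(3)[of z] assms(3) by simp
    moreover have "\<alpha> - \<beta> = \<beta>"
      using assms(2,3) by simp
    ultimately show ?thesis
      using Dfun_eq_csqrt_sum[OF \<open>(\<alpha> - \<beta>)\<^sup>2 = 4 * \<omega>\<close>, of z]
      by (simp add: power2_eq_square power4_eq_xxxx)
  qed
  then show ?thesis
    using assms(1) h(1,2)
    by (intro zero_of_multiplicity_factor[where S = "ball 0 \<omega>" and g = "\<lambda>z. 2 * (h z)\<^sup>2"])
      (auto intro!: holomorphic_intros)
qed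

lemma Dfun_zero_multiplicity_2:
  assumes "\<omega> > 0" "\<alpha> - \<beta> = 2 * sqrt \<omega>" "\<beta> \<noteq> 2 * sqrt \<omega>"
  shows "zero_of_multiplicity (Dfun \<omega> \<alpha> \<beta>) 0 2"
proof -
  obtain h where h: "h holomorphic_on ball 0 \<omega>" "\<And>z. h z \<noteq> 0"
    "\<And>z. csqrt_sum \<omega> z - of_real (2 * sqrt \<omega>) = z\<^sup>2 * h z"
    using csqrt_sum_sub_factor[OF assms(1)] by blast
  have "(\<alpha> - \<beta>)\<^sup>2 = 4 * \<omega>"
    using assms(1,2) by (simp add: power_mult_distrib)
  have "Dfun \<omega> \<alpha> \<beta> z = 2 * h z * (csqrt_sum \<omega> z - of_real \<beta>) * (z - 0) ^ 2" for z
  proof -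
    have "csqrt_sum \<omega> z - of_real (\<alpha> - \<beta>) = z\<^sup>2 * h z"
      using h(3)[of z] assms(2) by simp
    then show ?thesis
      using Dfun_eq_csqrt_sum[OF \<open>(\<alpha> - \<beta>)\<^sup>2 = 4 * \<omega>\<close>, of z] by simp
  qed
  moreover have "csqrt_sum \<omega> 0 - of_real \<beta> \<noteq> 0"
    using csqrt_sum_0[of \<omega>] assms(1,3) by (metis less_imp_le of_real_eq_iff right_minus_eq)
  ultimately show ?thesis
    using assms(1) h(1,2)
    by (intro zero_of_multiplicity_factor[where S = "ball 0 \<omega>"
          and g = "\<lambda>z. 2 * h z * (csqrt_sum \<omega> z - of_real \<beta>)"])
      (auto intro!: holomorphic_intros csqrt_sum_holomorphic)
qed

theorem lemmaA2:
  fixes a a' C b \<omega> \<alpha> \<beta> :: real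
  assumes "a > 0" and "C > 0"
    and "b = 2 * a' * C\<^sup>2" and "\<omega> = a\<^sup>2 / 4"
    and "\<alpha> = a + b / 2" and "\<beta> = b / 2"
  shows "(a' = a / C\<^sup>2 \<longrightarrow> zero_of_multiplicity (Dfun \<omega> \<alpha> \<beta>) 0 4)
       \<and> (a' \<noteq> a / C\<^sup>2 \<longrightarrow> zero_of_multiplicity (Dfun \<omega> \<alpha> \<beta>) 0 2)"
proof -
  have "\<omega> = (a / 2)\<^sup>2"
    using assms(4) by (simp add: power_divide)
  then have "\<omega> > 0" and "a = 2 * sqrt \<omega>"
    using assms(1) by simp_all
  moreover have "\<alpha> - \<beta> = a"
    using assms(5,6) by simp
  moreover have "a' = a / C\<^sup>2 \<longleftrightarrow> \<beta> = a"
    using assms(2,3,6) by (auto simp: field_simps)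
  ultimately show ?thesis
    using Dfun_zero_multiplicity_4 Dfun_zero_multiplicity_2 by auto
qed

end
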